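(* The group $\Gamma({A_1}_1)$ of permutations of $\mathbb Q\times\mathbb Z$ preserving the 1-codirection relation ${A_1}_1$ coincides with the set of all permutations of $\mathbb Q\times\mathbb Z$ that are either positive or negative.
   Context: $\mathbb Q\times\mathbb Z$ denotes the set $\mathbb Q\times\mathbb Z$ with the lexicographic order: $(r,z)<(r',z')$ iff $r<r'$, or $r=r'$ and $z<z'$. Relations defined on $\mathbb Z$ by first-order formulas in the signature $\{<\}$ are interpreted on $\mathbb Q\times\mathbb Z$ by the same formulas, and $\Gamma(R)$ is the group of permutations of $\mathbb Q\times\mathbb Z$ preserving $R$ (i.e. $R(\bar a)\iff R(g(\bar a))$). The 1-codirection relation is ${A_1}_1(x,y,z,t)\iff (x-y=z-t)\wedge|x-y|=1$, expressed in the order signature as: ($x$ is the immediate successor of $y$ and $z$ is the immediate successor of $t$) or ($y$ is the immediate successor of $x$ and $t$ is the immediate successor of $z$). A vertical is a set $\{r\}\times\mathbb Z$, $r\in\mathbb Q$. A permutation is systemic if it maps every vertical onto a vertical. A systemic permutation is positive if it preserves the order on each vertical (i.e. its restriction to each vertical is order preserving), and negative if it reverses the order on each vertical. *)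

theory Defs
  imports Main "HOL.Rat"
begin

type_synonym pt = "rat \<times> int"

definition lexless :: "pt \<Rightarrow> pt \<Rightarrow> bool" where
  "lexless a b \<longleftrightarrow> fst a < fst b \<or> (fst a = fst b \<and> snd a < snd b)"

definition imm_succ :: "pt \<Rightarrow> pt \<Rightarrow> bool" where
  "imm_succ x y \<longleftrightarrow> lexless y x \<and> \<not> (\<exists>w. lexless y w \<and> lexless w x)"

definition A11 :: "pt \<Rightarrow> pt \<Rightarrow> pt \<Rightarrow> pt \<Rightarrow> bool" where
  "A11 x y z t \<longleftrightarrow> (imm_succ x y \<and> imm_succ z t) \<or> (imm_succ y x \<and> imm_succ t z)"

definition Gamma4 :: "(pt \<Rightarrow> pt \<Rightarrow> pt \<Rightarrow> pt \<Rightarrow> bool) \<Rightarrow> (pt \<Rightarrow> pt) set" where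
  "Gamma4 R = {g. bij g \<and> (\<forall>a b c d. R a b c d \<longleftrightarrow> R (g a) (g b) (g c) (g d))}"

definition vertical :: "rat \<Rightarrow> pt set" where
  "vertical r = {r} \<times> UNIV"

definition systemic :: "(pt \<Rightarrow> pt) \<Rightarrow> bool" where
  "systemic g \<longleftrightarrow> bij g \<and> (\<forall>r. \<exists>r'. g ` vertical r = vertical r')"

definition positive_perm :: "(pt \<Rightarrow> pt) \<Rightarrow> bool" where
  "positive_perm g \<longleftrightarrow> systemic g \<and>
     (\<forall>r. \<forall>a\<in>vertical r. \<forall>b\<in>vertical r. lexless a b \<longrightarrow> lexless (g a) (g b))"

definition negative_perm :: "(pt \<Rightarrow> pt) \<Rightarrow> bool" where
  "negative_perm g \<longleftrightarrow> systemic g \<and>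
     (\<forall>r. \<forall>a\<in>vertical r. \<forall>b\<in>vertical r. lexless a b \<longrightarrow> lexless (g b) (g a))"

end

theory Submission
  imports Defs
begin

text \<open>Immediate successors in the lexicographic order lie on a common vertical and differ
by one, so a permutation preserving \<open>A11\<close> moves every successor pair the same way as one
fixed pair: it either preserves or reverses the successor relation throughout. Hence it maps
each vertical onto a vertical by a translation \<open>m \<mapsto> d + m\<close> or by a reflection
\<open>m \<mapsto> d - m\<close>, with the same choice on all verticals. Conversely, a monotone bijection
between two copies of \<open>\<int>\<close> is a translation, so positive and negative permutations have
exactly this form, and such maps visibly preserve \<open>A11\<close>.\<close>

definition vertically_affine :: "(pt \<Rightarrow> pt) \<Rightarrow> int \<Rightarrow> bool" where
  "vertically_affine g e \<longleftrightarrow> (\<exists>c d. \<forall>r m. g (r, m) = (c r, d r + e * m))"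

lemma vertically_affineI:
  assumes "\<And>r m. g (r, m) = (fst (g (r, 0)), snd (g (r, 0)) + e * m)"
  shows "vertically_affine g e"
  unfolding vertically_affine_def
  by (rule exI[where x = "\<lambda>r. fst (g (r, 0))"], rule exI[where x = "\<lambda>r. snd (g (r, 0))"])
    (intro allI assms)

lemma imm_succ_iff: "imm_succ x y \<longleftrightarrow> fst x = fst y \<and> snd x = snd y + 1"
proof
  assume "imm_succ x y"
  hence less: "lexless y x" and no_between: "\<And>w. \<not> (lexless y w \<and> lexless w x)"
    unfolding imm_succ_def by auto
  have same_vertical: "fst x = fst y"
  proof (rule ccontr)
    assume "fst x \<noteq> fst y"
    with less have "lexless y (fst y, snd y + 1) \<and> lexless (fst y, snd y + 1) x"
      unfolding lexless_def by auto
    with no_between show False by blast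
  qed
  moreover have "\<not> snd x > snd y + 1"
  proof
    assume "snd x > snd y + 1"
    hence "lexless y (fst x, snd y + 1) \<and> lexless (fst x, snd y + 1) x"
      using same_vertical unfolding lexless_def by auto
    with no_between show False by blast
  qed
  ultimately show "fst x = fst y \<and> snd x = snd y + 1"
    using less unfolding lexless_def by auto
qed (auto simp: imm_succ_def lexless_def)

lemma strict_mono_surj_int_eq_shift:
  fixes h :: "int \<Rightarrow> int"
  assumes "strict_mono h" and "surj h"
  shows "h n = h 0 + n"
proof -
  have succ: "h (k + 1) = h k + 1" for k
  proof -
    obtain j where j: "h j = h k + 1" using \<open>surj h\<close> by (metis surjD)
    have "h k < h j" using j by simp
    hence "k < j" using strict_mono_less[OF \<open>strict_mono h\<close>] by blast
    hence "h (k + 1) \<le> h j" using \<open>strict_mono h\<close> by (simp add: strict_mono_less_eq)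
    moreover have "h k < h (k + 1)" using \<open>strict_mono h\<close> by (simp add: strict_mono_less)
    ultimately show ?thesis using j by simp
  qed
  show ?thesis
  proof (induction n rule: int_induct[where k = 0])
    case (step2 i)
    then show ?case using succ[of "i - 1"] by simp
  qed (simp_all add: succ)
qed

lemma systemic_fst_eq:
  assumes "systemic g"
  shows "fst (g (r, a)) = fst (g (r, b))"
proof -
  obtain r' where "g ` vertical r = vertical r'"
    using assms unfolding systemic_def by blast
  hence "g (r, k) \<in> vertical r'" for k unfolding vertical_def by blast
  hence "fst (g (r, k)) = r'" for k unfolding vertical_def by (auto simp: mem_Times_iff)
  thus ?thesis by simp
qed

lemma lexless_vertical_iff:
  assumes "a \<in> vertical r" and "b \<in> vertical r"
  shows "lexless a b \<longleftrightarrow> snd a < snd b"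
  using assms unfolding vertical_def lexless_def by auto

lemma systemic_vertically_affine:
  assumes "systemic g" and sign: "e = 1 \<or> e = -1"
    and mono: "\<And>r a b. a < b \<Longrightarrow> e * snd (g (r, a)) < e * snd (g (r, b))"
  shows "vertically_affine g e"
proof (rule vertically_affineI)
  fix r m
  obtain r' where onto: "g ` vertical r = vertical r'"
    using assms unfolding systemic_def by blast
  define h where "h k = e * snd (g (r, k))" for k
  have "strict_mono h" unfolding h_def by (rule strict_monoI) (rule mono)
  moreover have "surj h"
  proof -
    have "k \<in> range h" for k
    proof -
      have "(r', e * k) \<in> g ` vertical r" using onto unfolding vertical_def by auto
      then obtain v where "v \<in> vertical r" "g v = (r', e * k)" by auto
      hence "h (snd v) = k" using sign unfolding h_def vertical_def by auto
      thus ?thesis by (metis rangeI)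
    qed
    thus ?thesis by auto
  qed
  ultimately have "h m = h 0 + m" by (rule strict_mono_surj_int_eq_shift)
  hence "snd (g (r, m)) = snd (g (r, 0)) + e * m"
    using sign unfolding h_def by auto
  thus "g (r, m) = (fst (g (r, 0)), snd (g (r, 0)) + e * m)"
    using systemic_fst_eq[OF \<open>systemic g\<close>] by (metis prod.collapse)
qed

lemma positive_perm_vertically_affine:
  assumes "positive_perm g"
  shows "vertically_affine g 1"
proof -
  have "systemic g" using assms unfolding positive_perm_def by blast
  have mono: "1 * snd (g (r, a)) < 1 * snd (g (r, b))" if "a < b" for r a b
  proof -
    have "lexless (g (r, a)) (g (r, b))"
      using assms that unfolding positive_perm_def vertical_def lexless_def by auto
    thus ?thesis using systemic_fst_eq[OF \<open>systemic g\<close>, of r a b] by (auto simp: lexless_def)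
  qed
  show ?thesis by (rule systemic_vertically_affine[OF \<open>systemic g\<close> _ mono]) simp
qed

lemma negative_perm_vertically_affine:
  assumes "negative_perm g"
  shows "vertically_affine g (-1)"
proof -
  have "systemic g" using assms unfolding negative_perm_def by blast
  have mono: "(-1) * snd (g (r, a)) < (-1) * snd (g (r, b))" if "a < b" for r a b
  proof -
    have "lexless (g (r, b)) (g (r, a))"
      using assms that unfolding negative_perm_def vertical_def lexless_def by auto
    thus ?thesis using systemic_fst_eq[OF \<open>systemic g\<close>, of r a b] by (auto simp: lexless_def)
  qed
  show ?thesis by (rule systemic_vertically_affine[OF \<open>systemic g\<close> _ mono]) simp
qed

lemma vertically_affine_of_imm_succ:
  assumes "\<And>z t. imm_succ z t \<Longrightarrow> fst (g z) = fst (g t) \<and> snd (g z) = snd (g t) + e"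
  shows "vertically_affine g e"
proof -
  have "g (r, m) = (fst (g (r, 0)), snd (g (r, 0)) + e * m)" for r m
  proof -
    have up: "g (r, k + 1) = (fst (g (r, k)), snd (g (r, k)) + e)" for k
      using assms[of "(r, k + 1)" "(r, k)"] by (simp add: imm_succ_iff prod_eq_iff)
    show ?thesis
    proof (induction m rule: int_induct[where k = 0])
      case (step1 i)
      then show ?case using up[of i] by (simp add: algebra_simps)
    next
      case (step2 i)
      then show ?case using up[of "i - 1"] by (simp add: algebra_simps prod_eq_iff)
    qed simp
  qed
  thus ?thesis by (rule vertically_affineI)
qed

lemma vertically_affine_imm_succ_iff:
  assumes "inj g" and "vertically_affine g e" and sign: "e = 1 \<or> e = -1"
  shows "imm_succ (g x) (g y) \<longleftrightarrow> fst x = fst y \<and> snd x = snd y + e"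
proof -
  obtain c d where g_eq: "\<And>r m. g (r, m) = (c r, d r + e * m)"
    using assms(2) unfolding vertically_affine_def by blast
  obtain r m r' n where x: "x = (r, m)" and y: "y = (r', n)" by fastforce
  have "r = r'" if "c r = c r'"
  proof -
    have "g (r', e * (d r - d r')) = g (r, 0)"
      using that sign by (auto simp: g_eq algebra_simps)
    thus ?thesis using \<open>inj g\<close> by (metis injD prod.inject)
  qed
  moreover have "e * m = e * n + 1 \<longleftrightarrow> m = n + e" using sign by auto
  ultimately show ?thesis unfolding imm_succ_iff x y g_eq by auto
qed

lemma vertically_affine_Gamma4:
  assumes "bij g" and "vertically_affine g e" and sign: "e = 1 \<or> e = -1"
  shows "g \<in> Gamma4 A11"
proof -
  have succ: "imm_succ (g x) (g y) \<longleftrightarrow> (if e = 1 then imm_succ x y else imm_succ y x)" for x y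
    using vertically_affine_imm_succ_iff[OF bij_is_inj[OF \<open>bij g\<close>] assms(2,3)] sign
    by (auto simp: imm_succ_iff)
  have "A11 (g a) (g b) (g c) (g d) \<longleftrightarrow> A11 a b c d" for a b c d
    using sign unfolding A11_def succ by auto
  thus ?thesis using \<open>bij g\<close> unfolding Gamma4_def by simp
qed

lemma vertically_affine_systemic:
  assumes "bij g" and "vertically_affine g e" and sign: "e = 1 \<or> e = -1"
  shows "systemic g"
proof -
  obtain c d where g_eq: "\<And>r m. g (r, m) = (c r, d r + e * m)"
    using assms(2) unfolding vertically_affine_def by blast
  have "g ` vertical r = vertical (c r)" for r
  proof
    show "g ` vertical r \<subseteq> vertical (c r)" unfolding vertical_def by (auto simp: g_eq)
    show "vertical (c r) \<subseteq> g ` vertical r"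
    proof
      fix p assume "p \<in> vertical (c r)"
      hence "p = g (r, e * (snd p - d r))"
        using sign unfolding vertical_def by (auto simp: g_eq prod_eq_iff)
      thus "p \<in> g ` vertical r" unfolding vertical_def by blast
    qed
  qed
  thus ?thesis using \<open>bij g\<close> unfolding systemic_def by blast
qed

lemma vertically_affine_lexless_vertical_iff:
  assumes "vertically_affine g e" and "a \<in> vertical r" and "b \<in> vertical r"
  shows "lexless (g a) (g b) \<longleftrightarrow> e * snd a < e * snd b"
proof -
  obtain c d where g_eq: "\<And>r m. g (r, m) = (c r, d r + e * m)"
    using assms(1) unfolding vertically_affine_def by blast
  obtain m n where "a = (r, m)" "b = (r, n)" using assms(2,3) unfolding vertical_def by auto
  thus ?thesis by (simp add: lexless_def g_eq)
qed

lemma vertically_affine_positive_perm: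
  assumes "bij g" and "vertically_affine g 1"
  shows "positive_perm g"
  using vertically_affine_systemic[OF assms] vertically_affine_lexless_vertical_iff[OF assms(2)]
    lexless_vertical_iff
  unfolding positive_perm_def by simp

lemma vertically_affine_negative_perm:
  assumes "bij g" and "vertically_affine g (-1)"
  shows "negative_perm g"
  using vertically_affine_systemic[OF assms] vertically_affine_lexless_vertical_iff[OF assms(2)]
    lexless_vertical_iff
  unfolding negative_perm_def by simp

lemma Gamma4_A11_vertically_affine:
  assumes "g \<in> Gamma4 A11"
  obtains e where "e = 1 \<or> e = -1" and "vertically_affine g e"
proof -
  have preserves: "A11 a b c d \<longleftrightarrow> A11 (g a) (g b) (g c) (g d)" for a b c d
    using assms unfolding Gamma4_def by blast
  define x0 :: pt where "x0 = (0, 1)"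
  define y0 :: pt where "y0 = (0, 0)"
  have base: "imm_succ x0 y0" unfolding x0_def y0_def by (simp add: imm_succ_iff)
  define e where "e = snd (g x0) - snd (g y0)"
  have pairs: "imm_succ z t \<Longrightarrow> A11 (g x0) (g y0) (g z) (g t)" for z t
    using base preserves[of x0 y0 z t] unfolding A11_def by blast
  from pairs[OF base] have sign: "e = 1 \<or> e = -1"
    unfolding e_def A11_def imm_succ_iff by auto
  have "fst (g z) = fst (g t) \<and> snd (g z) = snd (g t) + e" if "imm_succ z t" for z t
    using pairs[OF that] unfolding e_def A11_def imm_succ_iff by auto
  thus ?thesis using that sign vertically_affine_of_imm_succ by blast
qed

theorem lemma1:
  shows "Gamma4 A11 = {g. bij g \<and> (positive_perm g \<or> negative_perm g)}"
proof (intro set_eqI iffI)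
  fix g assume g: "g \<in> Gamma4 A11"
  then have "bij g" unfolding Gamma4_def by blast
  moreover obtain e where "e = 1 \<or> e = -1" "vertically_affine g e"
    using Gamma4_A11_vertically_affine[OF g] .
  ultimately show "g \<in> {g. bij g \<and> (positive_perm g \<or> negative_perm g)}"
    using vertically_affine_positive_perm vertically_affine_negative_perm by blast
next
  fix g assume "g \<in> {g. bij g \<and> (positive_perm g \<or> negative_perm g)}"
  then show "g \<in> Gamma4 A11"
    using vertically_affine_Gamma4 positive_perm_vertically_affine
      negative_perm_vertically_affine by blast
qed

end
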